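(* Let $k\ge\ell\ge1$ be integers with $k+\ell\ge6$ and let $G$ be a finite digraph. For every pair of non-adjacent vertices $x\in X$, $y\in Y$, $$s(x,y)\le\frac{m-1}{(m+1)\binom{m}{k}}(\alpha+\beta)(1-D)^{m-2}.$$
   Context: Put $m=k+\ell$. Digraphs are finite, without loops; $xy$ denotes an arc from $x$ to $y$; two vertices are adjacent if at least one of $xy,yx$ is an arc. The oriented star $S_{k,\ell}$ has a center $c$, a set $O$ of $k$ out-leaves and a set $I$ of $\ell$ in-leaves; its arcs are exactly $co$ ($o\in O$) and $ic$ ($i\in I$). For a digraph $G$ on $n$ vertices, let $\phi$ be a uniformly random map from $V(S_{k,\ell})$ to $V(G)$ (all $n^{m+1}$ maps equally likely), and let $\mathcal S$ be the set of maps $\phi$ that are isomorphisms from $S_{k,\ell}$ onto $G[\mathrm{Im}\,\phi]$ (in particular injective); $s(x,y)=\Pr[\phi\in\mathcal S\mid \{x,y\}\subseteq\mathrm{Im}\,\phi]$. For $A\subseteq V(G)$, $\rho_A(v)$ is the number of vertices of $A$ adjacent to $v$ divided by $n$, and $\rho(v)=\rho_{V(G)}(v)$. $X=\{v:\rho(v)\ge1/2\}$, $Y=V(G)\setminus X$, $\alpha=|X|/n$, $D=\min_{x\in X}\rho(x)$, $\beta=\max_{y\in Y}\rho_Y(y)$. *)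

theory Defs
  imports Complex_Main "HOL-Library.FuncSet"
begin

definition digraph :: "'a set \<Rightarrow> ('a \<times> 'a) set \<Rightarrow> bool" where
  "digraph V E \<longleftrightarrow> finite V \<and> E \<subseteq> V \<times> V \<and> (\<forall>v. (v, v) \<notin> E)"

definition adj :: "('a \<times> 'a) set \<Rightarrow> 'a \<Rightarrow> 'a \<Rightarrow> bool" where
  "adj E u v \<longleftrightarrow> (u, v) \<in> E \<or> (v, u) \<in> E"

text \<open>The oriented star S_{k,l} on vertex set {0..k+l}: centre 0,
  out-leaves 1..k, in-leaves k+1..k+l.\<close>

definition star_arc :: "nat \<Rightarrow> nat \<Rightarrow> nat \<Rightarrow> nat \<Rightarrow> bool" where
  "star_arc k l i j \<longleftrightarrow>
     (i = 0 \<and> 1 \<le> j \<and> j \<le> k) \<or> (j = 0 \<and> k + 1 \<le> i \<and> i \<le> k + l)"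

definition star_maps :: "'a set \<Rightarrow> nat \<Rightarrow> nat \<Rightarrow> (nat \<Rightarrow> 'a) set" where
  "star_maps V k l = {0..k+l} \<rightarrow>\<^sub>E V"

definition star_isos :: "'a set \<Rightarrow> ('a \<times> 'a) set \<Rightarrow> nat \<Rightarrow> nat \<Rightarrow> (nat \<Rightarrow> 'a) set" where
  "star_isos V E k l = {\<phi> \<in> star_maps V k l. inj_on \<phi> {0..k+l} \<and>
      (\<forall>i\<in>{0..k+l}. \<forall>j\<in>{0..k+l}. ((\<phi> i, \<phi> j) \<in> E \<longleftrightarrow> star_arc k l i j))}"

text \<open>s(x,y) = Pr[phi \<in> S | {x,y} \<subseteq> Im phi] for uniform phi.\<close>
definition s_prob :: "'a set \<Rightarrow> ('a \<times> 'a) set \<Rightarrow> nat \<Rightarrow> nat \<Rightarrow> 'a \<Rightarrow> 'a \<Rightarrow> real" where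
  "s_prob V E k l x y =
     real (card {\<phi> \<in> star_isos V E k l. x \<in> \<phi> ` {0..k+l} \<and> y \<in> \<phi> ` {0..k+l}})
     / real (card {\<phi> \<in> star_maps V k l. x \<in> \<phi> ` {0..k+l} \<and> y \<in> \<phi> ` {0..k+l}})"

definition rho_on :: "'a set \<Rightarrow> ('a \<times> 'a) set \<Rightarrow> 'a set \<Rightarrow> 'a \<Rightarrow> real" where
  "rho_on V E A v = real (card {a \<in> A. adj E a v}) / real (card V)"

definition rho :: "'a set \<Rightarrow> ('a \<times> 'a) set \<Rightarrow> 'a \<Rightarrow> real" where
  "rho V E v = rho_on V E V v"

definition Xset :: "'a set \<Rightarrow> ('a \<times> 'a) set \<Rightarrow> 'a set" where
  "Xset V E = {v \<in> V. rho V E v \<ge> 1/2}"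

definition Yset :: "'a set \<Rightarrow> ('a \<times> 'a) set \<Rightarrow> 'a set" where
  "Yset V E = V - Xset V E"

definition alpha :: "'a set \<Rightarrow> ('a \<times> 'a) set \<Rightarrow> real" where
  "alpha V E = real (card (Xset V E)) / real (card V)"

definition Dmin :: "'a set \<Rightarrow> ('a \<times> 'a) set \<Rightarrow> real" where
  "Dmin V E = Min (rho V E ` Xset V E)"

definition beta :: "'a set \<Rightarrow> ('a \<times> 'a) set \<Rightarrow> real" where
  "beta V E = Max (rho_on V E (Yset V E) ` Yset V E)"

end

theory Submission
  imports Defs
begin

text \<open>
  Write m = k + l and n = |V|. In a copy of S_{k,l} containing the non-adjacent vertices x and y
  both are leaves, so the centre c is a neighbour of y other than x; there are at most
  (\<alpha> + \<beta>) n - 1 such c. Once c is fixed, the arcs between c and x, y decide whether x and y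
  sit on out- or in-slots, and the remaining m - 2 leaves are non-neighbours of x that are strict
  out- resp. in-neighbours of c. Counting slot assignments and using
  C(m-2, a) p^a q^b \<le> (p + q)^(m-2) bounds the copies with centre c by
  m (m-1) / C(m, k) \<cdot> ((1 - D) n - 2)^(m-2). On the other hand at least (m+1) m (n-2)^(m-1) maps
  hit both x and y, and D \<ge> 1/2 gives n ((1 - D) n - 2)^(m-2) \<le> (1 - D)^(m-2) (n-2)^(m-1).
\<close>

section \<open>Counting slot assignments\<close>

lemma binomial_term_le_power:
  fixes p q :: real
  assumes "0 \<le> p" "0 \<le> q"
  shows "real ((a + b) choose a) * p ^ a * q ^ b \<le> (p + q) ^ (a + b)"
proof -
  have "real ((a + b) choose a) * p ^ a * q ^ (a + b - a)
      \<le> (\<Sum>i\<le>a + b. real ((a + b) choose i) * p ^ i * q ^ (a + b - i))"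
    using assms by (intro member_le_sum) auto
  then show ?thesis
    by (simp add: binomial_ring)
qed

lemma card_Diff_doubleton:
  assumes "finite A" "i \<noteq> j"
  shows "card (A - {i, j}) = card A - of_bool (i \<in> A) - of_bool (j \<in> A)"
  using assms by (cases "i \<in> A"; cases "j \<in> A") (auto simp: card_Diff_subset_Int)

lemma prod_eq_power_card_Diff:
  assumes "finite T" "\<And>t. t \<in> T \<inter> R \<Longrightarrow> f t = 1" "\<And>t. t \<in> T - R \<Longrightarrow> f t = c"
  shows "prod f T = c ^ card (T - R)"
proof -
  have "prod f T = prod f (T \<inter> R) * prod f (T - R)"
    using assms(1) by (simp add: prod.Int_Diff)
  also have "\<dots> = c ^ card (T - R)"
    using assms(2,3) by simp
  finally show ?thesis .
qed

lemma card_subset_UN_le: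
  assumes "A \<subseteq> (\<Union>q\<in>Q. F q)" "finite Q" "\<And>q. q \<in> Q \<Longrightarrow> finite (F q) \<and> card (F q) = K"
  shows "card A \<le> card Q * K"
proof -
  have "card A \<le> card (\<Union>q\<in>Q. F q)"
    using assms by (intro card_mono) auto
  also have "\<dots> \<le> (\<Sum>q\<in>Q. card (F q))"
    using card_UN_le[OF assms(2)] .
  also have "\<dots> = card Q * K"
    using assms(3) by simp
  finally show ?thesis .
qed

lemma slot_count_le_power:
  fixes N q p r P m a b :: nat
  assumes "N \<le> q * (p ^ a * r ^ b)" "q * (m choose k) = m * (m - 1) * ((m - 2) choose a)"
    and "a + b = m - 2" "p + r \<le> P" "k \<le> m"
  shows "real N \<le> real m * (real m - 1) / real (m choose k) * real P ^ (m - 2)"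
proof -
  have "real ((m - 2) choose a) * real p ^ a * real r ^ b \<le> (real p + real r) ^ (m - 2)"
    using binomial_term_le_power[of "real p" "real r" a b] assms(3) by simp
  also have "\<dots> \<le> real P ^ (m - 2)"
    using assms(4) by (intro power_mono) (simp_all flip: of_nat_add)
  finally have binomial: "real ((m - 2) choose a) * real p ^ a * real r ^ b \<le> real P ^ (m - 2)" .
  have "real N \<le> real (q * (p ^ a * r ^ b))"
    using assms(1) by (simp only: of_nat_le_iff)
  then have "real N * real (m choose k) \<le> real (q * (p ^ a * r ^ b)) * real (m choose k)"
    by (rule mult_right_mono) simp
  also have "\<dots> = real (q * (m choose k)) * (real p ^ a * real r ^ b)"
    by simp
  also have "\<dots> = real m * (real m - 1) * (real ((m - 2) choose a) * real p ^ a * real r ^ b)"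
  proof (cases "m = 0")
    case False
    then show ?thesis unfolding assms(2) by (simp add: of_nat_diff mult_ac)
  qed (use assms(2) in simp)
  also have "\<dots> \<le> real m * (real m - 1) * real P ^ (m - 2)"
    by (intro mult_left_mono binomial) (cases m; simp)
  finally show ?thesis
    using assms(5) by (simp add: pos_le_divide_eq mult.commute)
qed

lemma card_slots_Diff_pair:
  fixes k l i j :: nat
  assumes "i \<in> {1..k+l}" "j \<in> {1..k+l}" "i \<noteq> j"
  shows "card ({1..k} - {i, j}) = k - of_bool (i \<le> k) - of_bool (j \<le> k)"
    and "card ({k+1..k+l} - {i, j}) = l - of_bool (\<not> i \<le> k) - of_bool (\<not> j \<le> k)"
    and "card ({1..k} - {i, j}) + card ({k+1..k+l} - {i, j}) = k + l - 2"
proof -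
  show "card ({1..k} - {i, j}) = k - of_bool (i \<le> k) - of_bool (j \<le> k)"
    "card ({k+1..k+l} - {i, j}) = l - of_bool (\<not> i \<le> k) - of_bool (\<not> j \<le> k)"
    using assms by (simp_all add: card_Diff_doubleton)
  have split: "{1..k+l} - {i, j} = ({1..k} - {i, j}) \<union> ({k+1..k+l} - {i, j})" by auto
  have "card ({1..k} - {i, j}) + card ({k+1..k+l} - {i, j}) = card ({1..k+l} - {i, j})"
    unfolding split by (rule card_Un_disjoint[symmetric]) auto
  also have "\<dots> = k + l - 2"
    using assms by (simp add: card_Diff_doubleton)
  finally show "card ({1..k} - {i, j}) + card ({k+1..k+l} - {i, j}) = k + l - 2" .
qed

lemma times_times_binomial_minus2_eq:
  assumes "2 \<le> k"
  shows "k * (k - 1) * (n choose k) = n * (n - 1) * ((n - 2) choose (k - 2))"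
proof -
  have "k * (k - 1) * (n choose k) = (k - 1) * (n * ((n - 1) choose (k - 1)))"
    using assms by (simp add: times_binomial_minus1_eq)
  also have "\<dots> = n * ((n - 1) * ((n - 1 - 1) choose (k - 1 - 1)))"
    using assms by (simp add: times_binomial_minus1_eq)
  finally show ?thesis
    by (simp add: numeral_2_eq_2)
qed

lemma times_times_binomial_add_eq:
  assumes "1 \<le> k" "1 \<le> l"
  shows "k * l * ((k + l) choose k) = (k + l) * (k + l - 1) * ((k + l - 2) choose (k - 1))"
proof -
  have "k * l * ((k + l) choose k) = l * ((k + l) * ((k + l - 1) choose l))"
    using assms binomial_symmetric[of "k - 1" "k + l - 1"]
    by (simp add: times_binomial_minus1_eq)
  also have "\<dots> = (k + l) * ((k + l - 1) * ((k + l - 2) choose (l - 1)))"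
    using assms times_binomial_minus1_eq[of l "k + l - 1"] by (simp add: numeral_2_eq_2)
  also have "(k + l - 2) choose (l - 1) = (k + l - 2) choose (k - 1)"
    using assms binomial_symmetric[of "l - 1" "k + l - 2"] by simp
  finally show ?thesis
    by simp
qed

definition slot_pairs :: "nat \<Rightarrow> nat \<Rightarrow> nat \<Rightarrow> nat \<Rightarrow> (nat \<times> nat) set" where
  "slot_pairs k l i0 j0 = {(i, j). i \<in> {1..k+l} \<and> j \<in> {1..k+l} \<and> i \<noteq> j \<and>
                                   (i \<le> k \<longleftrightarrow> i0 \<le> k) \<and> (j \<le> k \<longleftrightarrow> j0 \<le> k)}"

lemma finite_slot_pairs: "finite (slot_pairs k l i0 j0)"
  unfolding slot_pairs_def by (rule finite_subset[of _ "{1..k+l} \<times> {1..k+l}"]) auto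

lemma slot_pairs_card_Diff:
  assumes "(i, j) \<in> slot_pairs k l i0 j0" "i0 \<in> {1..k+l}" "j0 \<in> {1..k+l}" "i0 \<noteq> j0"
  shows "card ({1..k} - {i, j}) = card ({1..k} - {i0, j0})"
    and "card ({k+1..k+l} - {i, j}) = card ({k+1..k+l} - {i0, j0})"
proof -
  have ij: "i \<in> {1..k+l}" "j \<in> {1..k+l}" "i \<noteq> j" "(i \<le> k) = (i0 \<le> k)" "(j \<le> k) = (j0 \<le> k)"
    using assms(1) unfolding slot_pairs_def by auto
  show "card ({1..k} - {i, j}) = card ({1..k} - {i0, j0})"
    "card ({k+1..k+l} - {i, j}) = card ({k+1..k+l} - {i0, j0})"
    unfolding card_slots_Diff_pair(1,2)[OF ij(1-3)] card_slots_Diff_pair(1,2)[OF assms(2-4)] ij(4,5)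
    by simp_all
qed

lemma card_slot_pairs_times_binomial:
  fixes k l i0 j0 :: nat
  assumes "i0 \<in> {1..k+l}" "j0 \<in> {1..k+l}" "i0 \<noteq> j0"
  shows "card (slot_pairs k l i0 j0) * ((k + l) choose k)
       = (k + l) * (k + l - 1) * ((k + l - 2) choose card ({1..k} - {i0, j0}))"
proof -
  have card_same: "card (SIGMA i:S. S - {i}) = card S * (card S - 1)" if "finite S" for S :: "nat set"
    using that by simp
  have card_disjoint: "card (SIGMA i:S. T - {i}) = card S * card T"
    if "S \<inter> T = {}" for S T :: "nat set"
  proof -
    have "(SIGMA i:S. T - {i}) = S \<times> T" using that by auto
    then show ?thesis by (simp add: card_cartesian_product)
  qed
  consider "i0 \<le> k" "j0 \<le> k" | "i0 \<le> k" "k < j0" | "k < i0" "j0 \<le> k" | "k < i0" "k < j0"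
    by linarith
  then show ?thesis
  proof cases
    case 1
    then have "slot_pairs k l i0 j0 = (SIGMA i:{1..k}. {1..k} - {i})" by (auto simp: slot_pairs_def)
    then show ?thesis
      using 1 assms card_slots_Diff_pair(1)[OF assms] times_times_binomial_minus2_eq[of k "k + l"]
      by (simp add: card_same mult.assoc numeral_2_eq_2)
  next
    case 2
    then have "slot_pairs k l i0 j0 = (SIGMA i:{1..k}. {k+1..k+l} - {i})" by (auto simp: slot_pairs_def)
    then show ?thesis
      using 2 assms card_slots_Diff_pair(1)[OF assms] times_times_binomial_add_eq[of k l]
      by (simp add: card_disjoint)
  next
    case 3
    then have "slot_pairs k l i0 j0 = (SIGMA i:{k+1..k+l}. {1..k} - {i})" by (auto simp: slot_pairs_def)
    then show ?thesis
      using 3 assms card_slots_Diff_pair(1)[OF assms] times_times_binomial_add_eq[of k l]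
      by (simp add: card_disjoint mult.commute)
  next
    case 4
    then have "slot_pairs k l i0 j0 = (SIGMA i:{k+1..k+l}. {k+1..k+l} - {i})" by (auto simp: slot_pairs_def)
    then show ?thesis
      using 4 assms card_slots_Diff_pair(1)[OF assms] times_times_binomial_minus2_eq[of l "k + l"] binomial_symmetric[of k "k + l"]
        binomial_symmetric[of k "k + l - 2"]
      by (simp add: card_same)
  qed
qed

section \<open>Copies of the oriented star\<close>

lemma star_isosD:
  assumes "\<phi> \<in> star_isos V E k l"
  shows "\<phi> \<in> {0..k+l} \<rightarrow>\<^sub>E V" "inj_on \<phi> {0..k+l}"
    and "\<And>i j. i \<in> {0..k+l} \<Longrightarrow> j \<in> {0..k+l} \<Longrightarrow> (\<phi> i, \<phi> j) \<in> E \<longleftrightarrow> star_arc k l i j"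
  using assms unfolding star_isos_def star_maps_def by auto

lemma star_iso_adj_centre:
  assumes "\<phi> \<in> star_isos V E k l" "t \<in> {1..k+l}"
  shows "adj E (\<phi> 0) (\<phi> t)"
  using assms star_isosD(3)[OF assms(1), of 0 t] star_isosD(3)[OF assms(1), of t 0]
  unfolding adj_def star_arc_def by force

lemma star_iso_leaves_not_adj:
  assumes "\<phi> \<in> star_isos V E k l" "i \<in> {1..k+l}" "j \<in> {1..k+l}"
  shows "\<not> adj E (\<phi> i) (\<phi> j)"
  using assms star_isosD(3)[OF assms(1), of i j] star_isosD(3)[OF assms(1), of j i]
  unfolding adj_def star_arc_def by auto

lemma star_iso_out_arc_iff:
  assumes "\<phi> \<in> star_isos V E k l" "t \<in> {1..k+l}"
  shows "(\<phi> 0, \<phi> t) \<in> E \<longleftrightarrow> t \<le> k"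
  using assms star_isosD(3)[OF assms(1), of 0 t] unfolding star_arc_def by auto

lemma star_iso_in_arc_iff:
  assumes "\<phi> \<in> star_isos V E k l" "t \<in> {1..k+l}"
  shows "(\<phi> t, \<phi> 0) \<in> E \<longleftrightarrow> k < t"
  using assms star_isosD(3)[OF assms(1), of t 0] unfolding star_arc_def by auto

lemma star_iso_nonadjacent_leaves:
  assumes "\<phi> \<in> star_isos V E k l" "x \<in> \<phi> ` {0..k+l}" "y \<in> \<phi> ` {0..k+l}"
    and "x \<noteq> y" "\<not> adj E x y"
  obtains i j where "i \<in> {1..k+l}" "j \<in> {1..k+l}" "i \<noteq> j" "\<phi> i = x" "\<phi> j = y"
proof -
  obtain i j where i: "i \<in> {0..k+l}" "\<phi> i = x" and j: "j \<in> {0..k+l}" "\<phi> j = y"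
    using assms(2,3) by auto
  have "i \<noteq> j" using i j assms(4) by auto
  have "i \<noteq> 0"
  proof
    assume "i = 0"
    then have "j \<in> {1..k+l}" using j \<open>i \<noteq> j\<close> by auto
    then have "adj E (\<phi> 0) (\<phi> j)" by (rule star_iso_adj_centre[OF assms(1)])
    with i j \<open>i = 0\<close> assms(5) show False by simp
  qed
  moreover have "j \<noteq> 0"
  proof
    assume "j = 0"
    then have "i \<in> {1..k+l}" using i \<open>i \<noteq> j\<close> by auto
    then have "adj E (\<phi> 0) (\<phi> i)" by (rule star_iso_adj_centre[OF assms(1)])
    with i j \<open>j = 0\<close> assms(5) show False by (auto simp: adj_def)
  qed
  ultimately show ?thesis using i j \<open>i \<noteq> j\<close> by (intro that[of i j]) auto
qed

text \<open>The absent reverse arc keeps out- and in-neighbours disjoint.\<close>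

definition strict_out_nbrs :: "('a \<times> 'a) set \<Rightarrow> 'a \<Rightarrow> 'a set \<Rightarrow> 'a set" where
  "strict_out_nbrs E c A = {v \<in> A. (c, v) \<in> E \<and> (v, c) \<notin> E}"

definition strict_in_nbrs :: "('a \<times> 'a) set \<Rightarrow> 'a \<Rightarrow> 'a set \<Rightarrow> 'a set" where
  "strict_in_nbrs E c A = {v \<in> A. (v, c) \<in> E \<and> (c, v) \<notin> E}"

lemma card_strict_nbrs_le:
  assumes "finite A"
  shows "card (strict_out_nbrs E c A) + card (strict_in_nbrs E c A) \<le> card A"
proof -
  have "card (strict_out_nbrs E c A) + card (strict_in_nbrs E c A)
      = card (strict_out_nbrs E c A \<union> strict_in_nbrs E c A)"
    using assms unfolding strict_out_nbrs_def strict_in_nbrs_def by (intro card_Un_disjoint[symmetric]) auto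
  also have "\<dots> \<le> card A"
    using assms unfolding strict_out_nbrs_def strict_in_nbrs_def by (intro card_mono) auto
  finally show ?thesis .
qed

definition star_slots :: "nat \<Rightarrow> 'a \<Rightarrow> nat \<Rightarrow> 'a \<Rightarrow> nat \<Rightarrow> 'a \<Rightarrow> 'a set \<Rightarrow> 'a set \<Rightarrow> nat \<Rightarrow> 'a set" where
  "star_slots k c i x j y Out In t =
     (if t = 0 then {c} else if t = i then {x} else if t = j then {y} else if t \<le> k then Out else In)"

lemma card_PiE_star_slots:
  "card (PiE {0..k+l} (star_slots k c i x j y Out In))
     = card Out ^ card ({1..k} - {i, j}) * card In ^ card ({k+1..k+l} - {i, j})"
proof -
  let ?f = "\<lambda>t. card (star_slots k c i x j y Out In t)"
  have "{0..k+l} = insert 0 ({1..k} \<union> {k+1..k+l})" by auto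
  then have "card (PiE {0..k+l} (star_slots k c i x j y Out In)) = prod ?f {1..k} * prod ?f {k+1..k+l}"
    by (simp add: card_PiE prod.union_disjoint star_slots_def)
  also have "prod ?f {1..k} = card Out ^ card ({1..k} - {i, j})"
    by (rule prod_eq_power_card_Diff) (auto simp: star_slots_def)
  also have "prod ?f {k+1..k+l} = card In ^ card ({k+1..k+l} - {i, j})"
    by (rule prod_eq_power_card_Diff) (auto simp: star_slots_def)
  finally show ?thesis .
qed

lemma star_iso_in_PiE_star_slots:
  assumes "\<phi> \<in> star_isos V E k l" "i \<in> {1..k+l}" "j \<in> {1..k+l}"
  defines "P \<equiv> {v \<in> V. \<not> adj E v (\<phi> i)} - {\<phi> i, \<phi> j}"
  shows "\<phi> \<in> PiE {0..k+l}
    (star_slots k (\<phi> 0) i (\<phi> i) j (\<phi> j) (strict_out_nbrs E (\<phi> 0) P) (strict_in_nbrs E (\<phi> 0) P))"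
proof (rule PiE_I)
  fix t assume t: "t \<in> {0..k+l}"
  show "\<phi> t \<in> star_slots k (\<phi> 0) i (\<phi> i) j (\<phi> j) (strict_out_nbrs E (\<phi> 0) P) (strict_in_nbrs E (\<phi> 0) P) t"
  proof (cases "t = 0 \<or> t = i \<or> t = j")
    case False
    then have leaf: "t \<in> {1..k+l}" using t by auto
    have "\<phi> t \<in> V" using star_isosD(1)[OF assms(1)] t by auto
    moreover have "\<phi> t \<noteq> \<phi> i" "\<phi> t \<noteq> \<phi> j"
      using star_isosD(2)[OF assms(1)] t assms(2,3) False by (auto dest: inj_onD)
    moreover have "\<not> adj E (\<phi> t) (\<phi> i)" using star_iso_leaves_not_adj[OF assms(1) leaf assms(2)] .
    ultimately have "\<phi> t \<in> P" unfolding P_def by auto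
    then show ?thesis
      using False star_iso_out_arc_iff[OF assms(1) leaf] star_iso_in_arc_iff[OF assms(1) leaf]
      by (auto simp: star_slots_def strict_out_nbrs_def strict_in_nbrs_def)
  qed (auto simp: star_slots_def)
qed (use star_isosD(1)[OF assms(1)] in auto)

lemma star_isos_centred_subset_slots:
  fixes V :: "'a set" and E :: "('a \<times> 'a) set" and c x y :: 'a
  defines "P \<equiv> {v \<in> V. \<not> adj E v x} - {x, y}"
  assumes "x \<noteq> y" "\<not> adj E x y" "(c, x) \<in> E \<longleftrightarrow> i0 \<le> k" "(c, y) \<in> E \<longleftrightarrow> j0 \<le> k"
  shows "{\<phi> \<in> star_isos V E k l. \<phi> 0 = c \<and> x \<in> \<phi> ` {0..k+l} \<and> y \<in> \<phi> ` {0..k+l}}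
    \<subseteq> (\<Union>(i, j)\<in>slot_pairs k l i0 j0.
          PiE {0..k+l} (star_slots k c i x j y (strict_out_nbrs E c P) (strict_in_nbrs E c P)))"
proof
  fix \<phi> assume "\<phi> \<in> {\<phi> \<in> star_isos V E k l. \<phi> 0 = c \<and> x \<in> \<phi> ` {0..k+l} \<and> y \<in> \<phi> ` {0..k+l}}"
  then obtain i j where "i \<in> {1..k+l}" "j \<in> {1..k+l}" "i \<noteq> j" "\<phi> i = x" "\<phi> j = y"
    and "\<phi> 0 = c" and \<phi>: "\<phi> \<in> star_isos V E k l"
    using star_iso_nonadjacent_leaves[of \<phi> V E k l x y] assms(2,3) by auto
  with assms(4,5) star_iso_out_arc_iff[OF \<phi>] star_iso_in_PiE_star_slots[OF \<phi>, of i j]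
  show "\<phi> \<in> (\<Union>(i, j)\<in>slot_pairs k l i0 j0.
          PiE {0..k+l} (star_slots k c i x j y (strict_out_nbrs E c P) (strict_in_nbrs E c P)))"
    unfolding slot_pairs_def P_def by auto
qed

lemma card_star_isos_centred_le:
  fixes V :: "'a set" and E :: "('a \<times> 'a) set" and c x y :: 'a
  defines "P \<equiv> {v \<in> V. \<not> adj E v x} - {x, y}"
  assumes "finite V" "x \<noteq> y" "\<not> adj E x y"
  shows "real (card {\<phi> \<in> star_isos V E k l. \<phi> 0 = c \<and> x \<in> \<phi> ` {0..k+l} \<and> y \<in> \<phi> ` {0..k+l}})
    \<le> real (k + l) * (real (k + l) - 1) / real ((k + l) choose k) * real (card P) ^ (k + l - 2)"
    (is "real (card ?A) \<le> _")
proof (cases "?A = {}")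
  case False
  then obtain \<phi>0 where \<phi>0: "\<phi>0 \<in> ?A" by blast
  then obtain i0 j0 where ij0: "i0 \<in> {1..k+l}" "j0 \<in> {1..k+l}" "i0 \<noteq> j0" "\<phi>0 i0 = x" "\<phi>0 j0 = y"
    using star_iso_nonadjacent_leaves[of \<phi>0 V E k l x y] assms(3,4) by auto
  text \<open>The arcs between c and x, y fix the slot types of x and y in every copy.\<close>
  have types: "(c, x) \<in> E \<longleftrightarrow> i0 \<le> k" "(c, y) \<in> E \<longleftrightarrow> j0 \<le> k"
    using \<phi>0 ij0 star_iso_out_arc_iff[of \<phi>0 V E k l] by auto
  define Out where "Out = strict_out_nbrs E c P"
  define In where "In = strict_in_nbrs E c P"
  define a where "a = card ({1..k} - {i0, j0})"
  define b where "b = card ({k+1..k+l} - {i0, j0})"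
  have "finite P" using assms(2) unfolding P_def by simp
  then have "finite Out" "finite In"
    unfolding Out_def In_def strict_out_nbrs_def strict_in_nbrs_def by simp_all
  have cover: "?A \<subseteq> (\<Union>(i, j)\<in>slot_pairs k l i0 j0. PiE {0..k+l} (star_slots k c i x j y Out In))"
    using star_isos_centred_subset_slots[OF assms(3,4) types] unfolding Out_def In_def P_def .
  have slot_count: "finite (PiE {0..k+l} (star_slots k c i x j y Out In))
      \<and> card (PiE {0..k+l} (star_slots k c i x j y Out In)) = card Out ^ a * card In ^ b"
    if "(i, j) \<in> slot_pairs k l i0 j0" for i j
    using \<open>finite Out\<close> \<open>finite In\<close> slot_pairs_card_Diff[OF that ij0(1-3)] unfolding a_def b_def
    by (auto intro!: finite_PiE simp: star_slots_def card_PiE_star_slots)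
  have "card ?A \<le> card (slot_pairs k l i0 j0) * (card Out ^ a * card In ^ b)"
    by (rule card_subset_UN_le[OF cover finite_slot_pairs]) (auto simp: slot_count)
  moreover have "card Out + card In \<le> card P"
    unfolding Out_def In_def using \<open>finite P\<close> by (rule card_strict_nbrs_le)
  ultimately show ?thesis
    using card_slot_pairs_times_binomial[OF ij0(1-3)] card_slots_Diff_pair(3)[OF ij0(1-3)]
    unfolding a_def b_def by (intro slot_count_le_power) simp_all
next
  case True
  have "0 \<le> real (k + l) * (real (k + l) - 1)" by (cases "k + l = 0") auto
  then show ?thesis unfolding True by simp
qed

lemma card_star_isos_through_le:
  fixes V :: "'a set" and E :: "('a \<times> 'a) set" and x y :: 'a
  defines "P \<equiv> {v \<in> V. \<not> adj E v x} - {x, y}"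
  assumes "finite V" "x \<noteq> y" "\<not> adj E x y"
  shows "real (card {\<phi> \<in> star_isos V E k l. x \<in> \<phi> ` {0..k+l} \<and> y \<in> \<phi> ` {0..k+l}})
    \<le> real (card {c \<in> V. adj E c y})
       * (real (k + l) * (real (k + l) - 1) / real ((k + l) choose k) * real (card P) ^ (k + l - 2))"
proof -
  define A where "A c = {\<phi> \<in> star_isos V E k l. \<phi> 0 = c \<and> x \<in> \<phi> ` {0..k+l} \<and> y \<in> \<phi> ` {0..k+l}}" for c
  define C where "C = {c \<in> V. adj E c y}"
  have "finite C" using assms(2) unfolding C_def by simp
  have "star_isos V E k l \<subseteq> {0..k+l} \<rightarrow>\<^sub>E V"
    unfolding star_isos_def star_maps_def by auto
  then have "finite (star_isos V E k l)"
    by (rule finite_subset) (simp add: finite_PiE assms(2))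
  have "{\<phi> \<in> star_isos V E k l. x \<in> \<phi> ` {0..k+l} \<and> y \<in> \<phi> ` {0..k+l}} \<subseteq> (\<Union>c\<in>C. A c)"
  proof
    fix \<phi> assume \<phi>: "\<phi> \<in> {\<phi> \<in> star_isos V E k l. x \<in> \<phi> ` {0..k+l} \<and> y \<in> \<phi> ` {0..k+l}}"
    then obtain j where "j \<in> {1..k+l}" "y = \<phi> j"
      using star_iso_nonadjacent_leaves[of \<phi> V E k l x y] assms(3,4) by (metis (no_types, lifting) mem_Collect_eq)
    then have "\<phi> 0 \<in> C"
      using \<phi> star_iso_adj_centre[of \<phi> V E k l j] star_isosD(1)[of \<phi> V E k l] unfolding C_def by auto
    then show "\<phi> \<in> (\<Union>c\<in>C. A c)" using \<phi> unfolding A_def by auto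
  qed
  then have "card {\<phi> \<in> star_isos V E k l. x \<in> \<phi> ` {0..k+l} \<and> y \<in> \<phi> ` {0..k+l}} \<le> card (\<Union>c\<in>C. A c)"
    using \<open>finite C\<close> \<open>finite (star_isos V E k l)\<close> unfolding A_def by (intro card_mono) auto
  also have "\<dots> \<le> (\<Sum>c\<in>C. card (A c))"
    using card_UN_le[OF \<open>finite C\<close>] .
  finally have "real (card {\<phi> \<in> star_isos V E k l. x \<in> \<phi> ` {0..k+l} \<and> y \<in> \<phi> ` {0..k+l}})
      \<le> (\<Sum>c\<in>C. real (card (A c)))"
    by (simp flip: of_nat_sum)
  also have "\<dots> \<le> (\<Sum>c\<in>C. real (k + l) * (real (k + l) - 1) / real ((k + l) choose k) * real (card P) ^ (k + l - 2))"
    unfolding A_def P_def using assms(2-4) by (intro sum_mono card_star_isos_centred_le)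
  finally show ?thesis
    unfolding C_def by simp
qed

section \<open>Maps hitting two given vertices\<close>

definition maps_placing :: "'i set \<Rightarrow> 'a set \<Rightarrow> 'i \<Rightarrow> 'a \<Rightarrow> 'i \<Rightarrow> 'a \<Rightarrow> ('i \<Rightarrow> 'a) set" where
  "maps_placing I V i x j y = PiE I (\<lambda>t. if t = i then {x} else if t = j then {y} else V - {x, y})"

lemma maps_placing_fibres:
  assumes "\<phi> \<in> maps_placing I V i x j y" "i \<in> I" "j \<in> I" "i \<noteq> j" "x \<noteq> y"
  shows "{t \<in> I. \<phi> t = x} = {i}" "{t \<in> I. \<phi> t = y} = {j}"
proof -
  have mem: "\<phi> t \<in> (if t = i then {x} else if t = j then {y} else V - {x, y})" if "t \<in> I" for t
    using PiE_mem[OF assms(1)[unfolded maps_placing_def] that] .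
  have "\<phi> t = x \<longleftrightarrow> t = i" "\<phi> t = y \<longleftrightarrow> t = j" if "t \<in> I" for t
    using mem[OF that] assms(4,5) by (cases "t = i"; cases "t = j"; auto)+
  then show "{t \<in> I. \<phi> t = x} = {i}" "{t \<in> I. \<phi> t = y} = {j}"
    using assms(2,3) by auto
qed

lemma maps_placing_subset:
  assumes "x \<in> V" "y \<in> V" "i \<in> I" "j \<in> I" "i \<noteq> j" "x \<noteq> y"
  shows "maps_placing I V i x j y \<subseteq> {\<phi> \<in> I \<rightarrow>\<^sub>E V. x \<in> \<phi> ` I \<and> y \<in> \<phi> ` I}"
proof
  fix \<phi> assume \<phi>: "\<phi> \<in> maps_placing I V i x j y"
  have "maps_placing I V i x j y \<subseteq> I \<rightarrow>\<^sub>E V"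
    unfolding maps_placing_def using assms(1,2) by (intro PiE_mono) auto
  moreover have "i \<in> {t \<in> I. \<phi> t = x}" "j \<in> {t \<in> I. \<phi> t = y}"
    using maps_placing_fibres[OF \<phi> assms(3-6)] by simp_all
  ultimately show "\<phi> \<in> {\<phi> \<in> I \<rightarrow>\<^sub>E V. x \<in> \<phi> ` I \<and> y \<in> \<phi> ` I}"
    using \<phi> by auto
qed

lemma card_maps_placing:
  assumes "finite I" "finite V" "x \<in> V" "y \<in> V" "x \<noteq> y" "i \<in> I" "j \<in> I" "i \<noteq> j"
  shows "card (maps_placing I V i x j y) = (card V - 2) ^ (card I - 2)"
proof -
  have "card (maps_placing I V i x j y) = (card V - 2) ^ card (I - {i, j})"
    unfolding maps_placing_def card_PiE[OF assms(1)]
    using assms(1-5) card_Diff_subset[of "{x, y}" V]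
    by (intro prod_eq_power_card_Diff) auto
  also have "card (I - {i, j}) = card I - 2"
    using card_Diff_doubleton[OF assms(1,8)] assms(6,7) by simp
  finally show ?thesis .
qed

lemma card_maps_hitting_two_ge:
  assumes "finite I" "finite V" "x \<in> V" "y \<in> V" "x \<noteq> y"
  shows "card I * (card I - 1) * (card V - 2) ^ (card I - 2)
    \<le> card {\<phi> \<in> I \<rightarrow>\<^sub>E V. x \<in> \<phi> ` I \<and> y \<in> \<phi> ` I}"
proof -
  define D where "D p = maps_placing I V (fst p) x (snd p) y" for p
  define Pairs where "Pairs = (SIGMA i:I. I - {i})"
  have "finite Pairs" using assms(1) unfolding Pairs_def by simp
  have pair: "fst p \<in> I" "snd p \<in> I" "fst p \<noteq> snd p" if "p \<in> Pairs" for p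
    using that unfolding Pairs_def by auto
  have fibres: "{t \<in> I. \<phi> t = x} = {fst p}" "{t \<in> I. \<phi> t = y} = {snd p}"
    if "\<phi> \<in> D p" "p \<in> Pairs" for \<phi> p
    using maps_placing_fibres[OF that(1)[unfolded D_def] pair[OF that(2)] assms(5)] by simp_all
  have disjoint: "D p \<inter> D q = {}" if "p \<in> Pairs" "q \<in> Pairs" "p \<noteq> q" for p q
  proof (rule ccontr)
    assume "D p \<inter> D q \<noteq> {}"
    then obtain \<phi> where "\<phi> \<in> D p" "\<phi> \<in> D q" by blast
    then have "{fst p} = {fst q}" "{snd p} = {snd q}"
      using fibres[of \<phi> p] fibres[of \<phi> q] that(1,2) by simp_all
    then show False using \<open>p \<noteq> q\<close> by (simp add: prod_eq_iff)
  qed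
  have "card (D p) = (card V - 2) ^ (card I - 2)" if "p \<in> Pairs" for p
    unfolding D_def by (rule card_maps_placing[OF assms pair[OF that]])
  then have "card Pairs * (card V - 2) ^ (card I - 2) = (\<Sum>p\<in>Pairs. card (D p))"
    by simp
  also have "\<dots> = card (\<Union>p\<in>Pairs. D p)"
    using \<open>finite Pairs\<close> assms(1,2) disjoint
    by (intro card_UN_disjoint[symmetric]) (auto simp: D_def maps_placing_def intro!: finite_PiE)
  also have "\<dots> \<le> card {\<phi> \<in> I \<rightarrow>\<^sub>E V. x \<in> \<phi> ` I \<and> y \<in> \<phi> ` I}"
  proof (rule card_mono)
    show "finite {\<phi> \<in> I \<rightarrow>\<^sub>E V. x \<in> \<phi> ` I \<and> y \<in> \<phi> ` I}"
      using assms(1,2) by (simp add: finite_PiE)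
    have "D p \<subseteq> {\<phi> \<in> I \<rightarrow>\<^sub>E V. x \<in> \<phi> ` I \<and> y \<in> \<phi> ` I}" if "p \<in> Pairs" for p
      unfolding D_def by (rule maps_placing_subset[OF assms(3,4) pair[OF that] assms(5)])
    then show "(\<Union>p\<in>Pairs. D p) \<subseteq> {\<phi> \<in> I \<rightarrow>\<^sub>E V. x \<in> \<phi> ` I \<and> y \<in> \<phi> ` I}"
      by blast
  qed
  finally show ?thesis
    using assms(1) by (simp add: Pairs_def)
qed

section \<open>The bound on s(x, y)\<close>

lemma times_power_le_power_Suc:
  fixes n u S :: real
  assumes "0 \<le> S" "S \<le> u * n - 2" "u \<le> 1/2" "1 \<le> e" "0 \<le> n"
  shows "n * S ^ e \<le> u ^ e * (n - 2) ^ (e + 1)"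
proof -
  obtain d where e: "e = Suc d" using assms(4) by (cases e) auto
  have "2 \<le> u * n" using assms(1,2) by simp
  then have "0 < u * n" by simp
  then have "0 < u" using assms(5) by (auto simp: zero_less_mult_iff)
  have "u * n \<le> 1/2 * n" using assms(3,5) by (rule mult_right_mono)
  then have "4 \<le> n" using \<open>2 \<le> u * n\<close> by simp
  have "S \<le> u * (n - 4)"
    using assms(2,3) by (simp add: algebra_simps)
  then have "n * S ^ e \<le> n * (u * (n - 4)) ^ e"
    using assms(1) \<open>4 \<le> n\<close> by (intro mult_left_mono power_mono) auto
  also have "\<dots> = u ^ e * ((n * (n - 4)) * (n - 4) ^ d)"
    unfolding e by (simp add: power_mult_distrib)
  also have "\<dots> \<le> u ^ e * ((n - 2) ^ 2 * (n - 2) ^ d)"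
  proof -
    have "n * (n - 4) \<le> (n - 2) ^ 2" by (simp add: power2_eq_square algebra_simps)
    moreover have "(n - 4) ^ d \<le> (n - 2) ^ d" using \<open>4 \<le> n\<close> by (intro power_mono) auto
    ultimately show ?thesis
      using \<open>0 < u\<close> \<open>4 \<le> n\<close> by (intro mult_left_mono mult_mono) auto
  qed
  also have "\<dots> = u ^ e * (n - 2) ^ (e + 1)"
    unfolding e by (simp flip: power_add)
  finally show ?thesis .
qed

lemma card_adj_le_alpha_beta:
  assumes "finite V" "x \<in> Xset V E" "y \<in> Yset V E" "\<not> adj E x y"
  shows "real (card {c \<in> V. adj E c y}) \<le> (alpha V E + beta V E) * real (card V) - 1"
proof -
  have "finite (Xset V E)" "finite (Yset V E)"
    using assms(1) unfolding Xset_def Yset_def by auto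
  have "0 < card V"
    using assms(1,2) unfolding Xset_def by (auto simp: card_gt_0_iff)
  have "{c \<in> V. adj E c y} \<subseteq> (Xset V E - {x}) \<union> {c \<in> Yset V E. adj E c y}"
    using assms(4) unfolding Yset_def by auto
  then have "card {c \<in> V. adj E c y} \<le> card ((Xset V E - {x}) \<union> {c \<in> Yset V E. adj E c y})"
    using \<open>finite (Xset V E)\<close> \<open>finite (Yset V E)\<close> by (intro card_mono) auto
  also have "\<dots> \<le> card (Xset V E - {x}) + card {c \<in> Yset V E. adj E c y}"
    by (rule card_Un_le)
  finally have "real (card {c \<in> V. adj E c y})
      \<le> real (card (Xset V E - {x})) + real (card {c \<in> Yset V E. adj E c y})"
    by (simp flip: of_nat_add)
  moreover have "1 \<le> card (Xset V E)"
    using assms(2) \<open>finite (Xset V E)\<close> by (auto simp: Suc_le_eq card_gt_0_iff)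
  then have "real (card (Xset V E - {x})) = alpha V E * real (card V) - 1"
    using assms(2) \<open>finite (Xset V E)\<close> \<open>0 < card V\<close> by (simp add: alpha_def of_nat_diff)
  moreover have "real (card {c \<in> Yset V E. adj E c y}) = rho_on V E (Yset V E) y * real (card V)"
    using \<open>0 < card V\<close> by (simp add: rho_on_def)
  moreover have "rho_on V E (Yset V E) y * real (card V) \<le> beta V E * real (card V)"
    unfolding beta_def using \<open>finite (Yset V E)\<close> assms(3) by (intro mult_right_mono Max_ge) auto
  ultimately show ?thesis
    by (simp add: algebra_simps)
qed

lemma Dmin_ge_half:
  assumes "finite V" "Xset V E \<noteq> {}"
  shows "1/2 \<le> Dmin V E"
proof -
  have "Dmin V E \<in> rho V E ` Xset V E"
    unfolding Dmin_def using assms by (intro Min_in) (auto simp: Xset_def)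
  then show ?thesis
    unfolding Xset_def by auto
qed

lemma card_non_nbrs_le:
  assumes "digraph V E" "x \<in> Xset V E" "y \<in> V" "x \<noteq> y" "\<not> adj E x y"
  shows "real (card ({v \<in> V. \<not> adj E v x} - {x, y})) \<le> (1 - Dmin V E) * real (card V) - 2"
proof -
  have "finite V" "(x, x) \<notin> E"
    using assms(1) unfolding digraph_def by auto
  have "x \<in> V" using assms(2) unfolding Xset_def by simp
  have "Dmin V E * real (card V) \<le> rho V E x * real (card V)"
    unfolding Dmin_def using \<open>finite V\<close> assms(2) by (intro mult_right_mono Min_le) (auto simp: Xset_def)
  also have "\<dots> = real (card {v \<in> V. adj E v x})"
    using \<open>finite V\<close> \<open>x \<in> V\<close> by (simp add: rho_def rho_on_def card_gt_0_iff)
  finally have degree: "Dmin V E * real (card V) \<le> real (card {v \<in> V. adj E v x})" .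
  have "{v \<in> V. \<not> adj E v x} = V - {v \<in> V. adj E v x}" by auto
  then have "card {v \<in> V. \<not> adj E v x} + card {v \<in> V. adj E v x} = card V"
    using \<open>finite V\<close> by (simp add: card_Diff_subset card_mono)
  moreover have "{x, y} \<subseteq> {v \<in> V. \<not> adj E v x}"
    using \<open>x \<in> V\<close> assms(3,5) \<open>(x, x) \<notin> E\<close> by (auto simp: adj_def)
  then have "card ({v \<in> V. \<not> adj E v x} - {x, y}) + 2 = card {v \<in> V. \<not> adj E v x}"
    using \<open>finite V\<close> assms(4) card_mono[OF _ \<open>{x, y} \<subseteq> _\<close>] by (simp add: card_Diff_subset)
  ultimately have "real (card ({v \<in> V. \<not> adj E v x} - {x, y})) + 2 + real (card {v \<in> V. adj E v x})
      = real (card V)"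
    by (metis of_nat_add of_nat_numeral)
  then show ?thesis
    using degree by (simp add: algebra_simps)
qed

lemma card_star_isos_through_le_alpha_beta:
  assumes "digraph V E" "x \<in> Xset V E" "y \<in> Yset V E" "\<not> adj E x y" "3 \<le> k + l"
  shows "real (card {\<phi> \<in> star_isos V E k l. x \<in> \<phi> ` {0..k+l} \<and> y \<in> \<phi> ` {0..k+l}})
    \<le> (alpha V E + beta V E) * (real (k + l) * (real (k + l) - 1) / real ((k + l) choose k))
       * (1 - Dmin V E) ^ (k + l - 2) * (real (card V) - 2) ^ (k + l - 1)"
proof -
  have "finite V" using assms(1) unfolding digraph_def by simp
  have "y \<in> V" "x \<noteq> y" using assms(2,3) unfolding Yset_def by auto
  define n where "n = real (card V)"
  define R where "R = real (k + l) * (real (k + l) - 1) / real ((k + l) choose k)"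
  define S where "S = real (card ({v \<in> V. \<not> adj E v x} - {x, y}))"
  define u where "u = 1 - Dmin V E"
  have "0 \<le> R" using assms(5) unfolding R_def by simp
  have adj_count: "real (card {c \<in> V. adj E c y}) \<le> (alpha V E + beta V E) * n - 1"
    unfolding n_def using card_adj_le_alpha_beta[OF \<open>finite V\<close> assms(2-4)] .
  then have "0 < (alpha V E + beta V E) * n" by (simp add: n_def)
  then have "0 \<le> alpha V E + beta V E" by (simp add: n_def zero_less_mult_iff)
  have pool: "n * S ^ (k + l - 2) \<le> u ^ (k + l - 2) * (n - 2) ^ (k + l - 2 + 1)"
  proof (rule times_power_le_power_Suc)
    show "S \<le> u * n - 2"
      unfolding S_def u_def n_def using card_non_nbrs_le[OF assms(1,2) \<open>y \<in> V\<close> \<open>x \<noteq> y\<close> assms(4)]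
      by (simp add: mult.commute)
    show "u \<le> 1/2"
      unfolding u_def using Dmin_ge_half[OF \<open>finite V\<close>] assms(2) by auto
  qed (use assms(5) in \<open>simp_all add: S_def n_def\<close>)
  have "real (card {\<phi> \<in> star_isos V E k l. x \<in> \<phi> ` {0..k+l} \<and> y \<in> \<phi> ` {0..k+l}})
      \<le> real (card {c \<in> V. adj E c y}) * (R * S ^ (k + l - 2))"
    unfolding R_def S_def using card_star_isos_through_le[OF \<open>finite V\<close> \<open>x \<noteq> y\<close> assms(4)] .
  also have "\<dots> \<le> ((alpha V E + beta V E) * n) * (R * S ^ (k + l - 2))"
    using adj_count \<open>0 \<le> R\<close> by (intro mult_right_mono) (auto simp: S_def)
  also have "\<dots> = (alpha V E + beta V E) * R * (n * S ^ (k + l - 2))"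
    by (simp add: algebra_simps)
  also have "\<dots> \<le> (alpha V E + beta V E) * R * (u ^ (k + l - 2) * (n - 2) ^ (k + l - 2 + 1))"
    using \<open>0 \<le> R\<close> \<open>0 \<le> alpha V E + beta V E\<close> by (intro mult_left_mono pool) auto
  also have "k + l - 2 + 1 = k + l - 1" using assms(5) by simp
  finally show ?thesis
    by (simp add: R_def u_def n_def mult_ac)
qed

lemma card_ge_four:
  assumes "digraph V E" "x \<in> Xset V E" "y \<in> V" "x \<noteq> y" "\<not> adj E x y"
  shows "4 \<le> real (card V)"
proof -
  have "finite V" using assms(1) unfolding digraph_def by simp
  have "0 \<le> (1 - Dmin V E) * real (card V) - 2"
    using card_non_nbrs_le[OF assms] by linarith
  moreover have "(1 - Dmin V E) * real (card V) \<le> 1/2 * real (card V)"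
    using Dmin_ge_half[OF \<open>finite V\<close>] assms(2) by (intro mult_right_mono) auto
  ultimately show ?thesis by simp
qed

lemma card_star_maps_through_ge:
  assumes "finite V" "x \<in> V" "y \<in> V" "x \<noteq> y"
  shows "real (k + l + 1) * real (k + l) * (real (card V) - 2) ^ (k + l - 1)
    \<le> real (card {\<phi> \<in> star_maps V k l. x \<in> \<phi> ` {0..k+l} \<and> y \<in> \<phi> ` {0..k+l}})"
proof -
  have "(k + l + 1) * (k + l) * (card V - 2) ^ (k + l - 1)
      \<le> card {\<phi> \<in> star_maps V k l. x \<in> \<phi> ` {0..k+l} \<and> y \<in> \<phi> ` {0..k+l}}"
    using card_maps_hitting_two_ge[of "{0..k+l}" V x y] assms unfolding star_maps_def by simp
  then have "real ((k + l + 1) * (k + l) * (card V - 2) ^ (k + l - 1))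
      \<le> real (card {\<phi> \<in> star_maps V k l. x \<in> \<phi> ` {0..k+l} \<and> y \<in> \<phi> ` {0..k+l}})"
    by (simp only: of_nat_le_iff)
  moreover have "2 \<le> card V"
    using card_mono[OF assms(1), of "{x, y}"] assms(2-4) by simp
  ultimately show ?thesis
    by (simp only: of_nat_mult of_nat_power of_nat_diff of_nat_numeral)
qed

lemma divide_le_divide_common_factor:
  fixes a b c d t :: real
  assumes "0 \<le> a" "a \<le> c * t" "d * t \<le> b" "0 < d" "0 < t"
  shows "a / b \<le> c / d"
proof -
  have "a / b \<le> (c * t) / (d * t)"
    using assms by (intro frac_le) auto
  then show ?thesis
    using assms(5) by simp
qed

theorem claim4p5:
  fixes V :: "'a set" and E :: "('a \<times> 'a) set" and k l :: nat and x y :: 'a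
  assumes "digraph V E"
    and "k \<ge> l" and "l \<ge> 1" and "k + l \<ge> 6"
    and "x \<in> Xset V E" and "y \<in> Yset V E" and "\<not> adj E x y"
  shows "s_prob V E k l x y \<le>
    (real (k + l) - 1) / ((real (k + l) + 1) * real ((k + l) choose k))
      * (alpha V E + beta V E) * (1 - Dmin V E) ^ (k + l - 2)"
proof -
  have "finite V" using assms(1) unfolding digraph_def by simp
  have "x \<in> V" "y \<in> V" "x \<noteq> y" using assms(5,6) unfolding Xset_def Yset_def by auto
  have "3 \<le> k + l" using assms(4) by simp
  have "0 < (real (card V) - 2) ^ (k + l - 1)"
    using card_ge_four[OF assms(1,5) \<open>y \<in> V\<close> \<open>x \<noteq> y\<close> assms(7)] by simp
  then have "s_prob V E k l x y
      \<le> (alpha V E + beta V E) * (real (k + l) * (real (k + l) - 1) / real ((k + l) choose k))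
          * (1 - Dmin V E) ^ (k + l - 2) / (real (k + l + 1) * real (k + l))"
    unfolding s_prob_def using \<open>3 \<le> k + l\<close>
    by (intro divide_le_divide_common_factor[OF _
          card_star_isos_through_le_alpha_beta[OF assms(1,5,6,7) \<open>3 \<le> k + l\<close>]
          card_star_maps_through_ge[OF \<open>finite V\<close> \<open>x \<in> V\<close> \<open>y \<in> V\<close> \<open>x \<noteq> y\<close>]]) auto
  also have "\<dots> = (real (k + l) - 1) / ((real (k + l) + 1) * real ((k + l) choose k))
      * (alpha V E + beta V E) * (1 - Dmin V E) ^ (k + l - 2)"
  proof -
    define M where "M = real (k + l)"
    define N where "N = real (k + l + 1)"
    have "M + 1 = N" "0 < M" "0 < real ((k + l) choose k)"
      unfolding M_def N_def using assms(4) by auto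
    then show ?thesis
      unfolding M_def[symmetric] N_def[symmetric] by (simp add: field_simps)
  qed
  finally show ?thesis .
qed

end
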